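(* There is a connected $4$-colouring of the edges of $K_{17}^{(3)}$ with no multicoloured $4$-set.
   Context: $K_n^{(3)}$ is the complete $3$-uniform hypergraph on $n$ vertices (edges are all $3$-subsets). A strong path in a $3$-uniform hypergraph $H$ is a sequence of edges $E_1,\dots,E_m$ of $H$ with $|E_t\cap E_{t+1}|=2$ for all $t$. $H$ is connected if for any two $2$-subsets $\{u,v\},\{u',v'\}$ of $V(H)$ there is a strong path $E_1,\dots,E_m$ in $H$ with $\{u,v\}\subseteq E_1$ and $\{u',v'\}\subseteq E_m$. A colouring of the edges of $K_n^{(3)}$ is connected if for each colour, the $3$-graph on all $n$ vertices formed by the edges of that colour is connected. A $4$-set of vertices is multicoloured if its four $3$-subsets receive four distinct colours. *)

theory Defs
  imports Main
begin

definition triples :: "'a set \<Rightarrow> 'a set set" where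
  "triples V = {e. e \<subseteq> V \<and> card e = 3}"

definition pairs :: "'a set \<Rightarrow> 'a set set" where
  "pairs V = {p. p \<subseteq> V \<and> card p = 2}"

definition strong_path :: "'a set set \<Rightarrow> 'a set list \<Rightarrow> bool" where
  "strong_path H Es \<longleftrightarrow> Es \<noteq> [] \<and> set Es \<subseteq> H \<and>
     (\<forall>t. Suc t < length Es \<longrightarrow> card (Es ! t \<inter> Es ! Suc t) = 2)"

definition hconnected :: "'a set \<Rightarrow> 'a set set \<Rightarrow> bool" where
  "hconnected V H \<longleftrightarrow> (\<forall>p\<in>pairs V. \<forall>q\<in>pairs V.
     \<exists>Es. strong_path H Es \<and> p \<subseteq> hd Es \<and> q \<subseteq> last Es)"

definition connected_colouring :: "'a set \<Rightarrow> nat \<Rightarrow> ('a set \<Rightarrow> nat) \<Rightarrow> bool" where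
  "connected_colouring V k c \<longleftrightarrow> (\<forall>e\<in>triples V. c e < k) \<and>
     (\<forall>i<k. hconnected V {e\<in>triples V. c e = i})"

definition multicoloured :: "('a set \<Rightarrow> nat) \<Rightarrow> 'a set \<Rightarrow> bool" where
  "multicoloured c S \<longleftrightarrow> card (c ` triples S) = 4"

end

theory Submission
  imports Defs
begin

text \<open>The vertices are split into seven classes, three of size 3 and four of size 2,
  and the colour of an edge depends only on the multiset of classes of its vertices.
  If a 4-set contains two vertices u, v of the same class, then its 3-subsets avoiding
  u and avoiding v have the same class multiset and hence the same colour. Otherwise the
  4-set meets four distinct classes, and its colours are those of four triples of classes;
  the colouring of class triples is chosen so that no four classes are multicoloured.
  Connectivity of each colour class is certified by an explicit sequence of edges which,
  starting from the pair {0, 1}, reaches every pair of vertices along strong paths.\<close>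

lemma strong_path_Nil [simp]: "\<not> strong_path H []"
  by (simp add: strong_path_def)

lemma strong_path_singleton [simp]: "strong_path H [e] \<longleftrightarrow> e \<in> H"
  by (simp add: strong_path_def)

lemma strong_path_Cons_Cons [simp]:
  "strong_path H (e # f # Es) \<longleftrightarrow> e \<in> H \<and> card (e \<inter> f) = 2 \<and> strong_path H (f # Es)"
  unfolding strong_path_def by (auto simp: All_less_Suc2 less_Suc_eq_0_disj)

lemma strong_path_append:
  assumes "strong_path H xs" "strong_path H ys" "card (last xs \<inter> hd ys) = 2"
  shows "strong_path H (xs @ ys)"
  using assms
proof (induction xs rule: induct_list012)
  case (2 x)
  then show ?case by (cases ys) auto
qed auto

lemma strong_path_rev: "strong_path H Es \<Longrightarrow> strong_path H (rev Es)"
proof (induction Es rule: induct_list012)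
  case (3 e f Es)
  then have "strong_path H (rev (f # Es))" "card (last (rev (f # Es)) \<inter> e) = 2"
    by (auto simp: Int_commute)
  then show ?case using strong_path_append[of H "rev (f # Es)" "[e]"] 3 by simp
qed auto

definition reachable :: "'a set set \<Rightarrow> 'a set \<Rightarrow> 'a set \<Rightarrow> bool" where
  "reachable H p q \<longleftrightarrow> (\<exists>Es. strong_path H Es \<and> p \<subseteq> hd Es \<and> q \<subseteq> last Es)"

lemma hconnected_iff_reachable:
  "hconnected V H \<longleftrightarrow> (\<forall>p\<in>pairs V. \<forall>q\<in>pairs V. reachable H p q)"
  by (simp add: hconnected_def reachable_def)

lemma reachable_edge: "e \<in> H \<Longrightarrow> p \<subseteq> e \<Longrightarrow> q \<subseteq> e \<Longrightarrow> reachable H p q"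
  unfolding reachable_def by (intro exI[of _ "[e]"]) simp

lemma reachable_sym: "reachable H p q \<Longrightarrow> reachable H q p"
  unfolding reachable_def by (metis strong_path_rev hd_rev last_rev)

lemma card_Int_eq_2_if_triples:
  assumes "card e = 3" "card f = 3" "e \<noteq> f" "q \<subseteq> e \<inter> f" "card q = 2"
  shows "card (e \<inter> f) = 2"
proof -
  have fin: "finite e" "finite f" using assms(1,2) by (simp_all add: card_ge_0_finite)
  have "e \<inter> f \<subset> e"
    using assms(1-3) fin by (metis Int_lower1 Int_absorb1 card_subset_eq inf_commute psubsetI)
  then have "card (e \<inter> f) < 3" using assms(1) fin psubset_card_mono by metis
  moreover have "card q \<le> card (e \<inter> f)" using assms(4) fin by (simp add: card_mono)
  ultimately show ?thesis using assms(5) by simp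
qed

lemma reachable_extend:
  assumes H: "\<forall>e\<in>H. card e = 3"
    and "reachable H p q" "card q = 2" "e \<in> H" "q \<subseteq> e" "r \<subseteq> e"
  shows "reachable H p r"
proof -
  obtain Es where Es: "strong_path H Es" "p \<subseteq> hd Es" "q \<subseteq> last Es"
    using assms(2) unfolding reachable_def by blast
  show ?thesis
  proof (cases "last Es = e")
    case True
    then show ?thesis using Es assms(6) unfolding reachable_def by blast
  next
    case False
    have "Es \<noteq> []" using Es(1) by auto
    then have "last Es \<in> H" using Es(1) by (auto simp: strong_path_def)
    then have "card (last Es \<inter> e) = 2"
      using card_Int_eq_2_if_triples[of "last Es" e q] False H Es(3) assms(3-5) by auto
    then have "strong_path H (Es @ [e])"
      using strong_path_append[of H Es "[e]"] Es(1) assms(4) by simp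
    moreover have "p \<subseteq> hd (Es @ [e])" using Es(2) \<open>Es \<noteq> []\<close> by simp
    moreover have "r \<subseteq> last (Es @ [e])" using assms(6) by simp
    ultimately show ?thesis unfolding reachable_def by blast
  qed
qed

lemma reachable_trans:
  assumes H: "\<forall>e\<in>H. card e = 3"
    and "reachable H p q" "reachable H q r" "card q = 2"
  shows "reachable H p r"
proof -
  obtain Fs where "strong_path H Fs" "q \<subseteq> hd Fs" "r \<subseteq> last Fs"
    using assms(3) unfolding reachable_def by blast
  then show ?thesis using assms(2,4)
  proof (induction Fs arbitrary: q rule: induct_list012)
    case (2 f)
    then show ?case using reachable_extend[OF H, of p q f r] by simp
  next
    case (3 f f' Fs)
    then have "reachable H p (f \<inter> f')"
      using reachable_extend[OF H, of p q f "f \<inter> f'"] by auto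
    then show ?case using "3.IH"(2)[of "f \<inter> f'"] "3.prems" by auto
  qed simp
qed

lemma hconnected_if_reachable_from:
  assumes H: "\<forall>e\<in>H. card e = 3"
    and "card p\<^sub>0 = 2" "\<forall>p\<in>pairs V. reachable H p\<^sub>0 p"
  shows "hconnected V H"
  using assms reachable_trans[OF H] reachable_sym
  unfolding hconnected_iff_reachable by metis

text \<open>An entry (u, v, w) records that the edge {u, v, w} is entered through the already
  reached pair {u, v}, which makes {u, w} and {v, w} reached as well.\<close>

fun extend_pairs :: "('a \<times> 'a) list \<Rightarrow> ('a \<times> 'a \<times> 'a) list \<Rightarrow> ('a \<times> 'a) list" where
  "extend_pairs R [] = R"
| "extend_pairs R ((u, v, w) # ts) = extend_pairs ((u, w) # (v, w) # R) ts"

fun valid_extension :: "'a set set \<Rightarrow> ('a \<times> 'a) list \<Rightarrow> ('a \<times> 'a \<times> 'a) list \<Rightarrow> bool" where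
  "valid_extension H R [] \<longleftrightarrow> True"
| "valid_extension H R ((u, v, w) # ts) \<longleftrightarrow>
     (u, v) \<in> set R \<and> {u, v, w} \<in> H \<and> valid_extension H ((u, w) # (v, w) # R) ts"

lemma card_pair_if_card_triple: "card {u, v, w} = 3 \<Longrightarrow> card {u, v} = 2"
  by (cases "u = v") (auto simp: card_insert_if split: if_splits)

lemma reachable_extend_pairs:
  assumes H: "\<forall>e\<in>H. card e = 3"
  shows "valid_extension H R ts \<Longrightarrow> \<forall>x y. (x, y) \<in> set R \<longrightarrow> reachable H p {x, y} \<Longrightarrow>
    (x, y) \<in> set (extend_pairs R ts) \<Longrightarrow> reachable H p {x, y}"
proof (induction R ts rule: extend_pairs.induct)
  case (2 R u v w ts)
  then have uvw: "{u, v, w} \<in> H" "reachable H p {u, v}" by auto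
  then have "card {u, v, w} = 3" using H by blast
  then have "card {u, v} = 2" by (rule card_pair_if_card_triple)
  then have "reachable H p {u, w}" "reachable H p {v, w}"
    using reachable_extend[OF H uvw(2)] uvw(1) by auto
  then have "\<forall>x y. (x, y) \<in> set ((u, w) # (v, w) # R) \<longrightarrow> reachable H p {x, y}"
    using "2.prems"(2) by simp
  moreover have "valid_extension H ((u, w) # (v, w) # R) ts" using "2.prems"(1) by simp
  ultimately show ?case using "2.IH" "2.prems"(3) by simp
qed simp

lemma hconnected_by_certificate:
  assumes H: "\<forall>e\<in>H. card e = 3"
    and valid: "valid_extension H [(a, b)] ts" "ts \<noteq> []"
    and covers: "\<forall>p\<in>pairs V. \<exists>(u, v)\<in>set (extend_pairs [(a, b)] ts). p = {u, v}"
  shows "hconnected V H"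
proof -
  obtain w where edge: "{a, b, w} \<in> H"
    using valid by (cases ts) auto
  have "card {a, b, w} = 3" using H edge by blast
  then have "card {a, b} = 2" by (rule card_pair_if_card_triple)
  have "reachable H {a, b} {a, b}" using edge by (rule reachable_edge) auto
  then have "reachable H {a, b} {u, v}" if "(u, v) \<in> set (extend_pairs [(a, b)] ts)" for u v
    using reachable_extend_pairs[OF H valid(1) _ that] by simp
  then have "\<forall>p\<in>pairs V. reachable H {a, b} p" using covers by fast
  then show ?thesis by (rule hconnected_if_reachable_from[OF H \<open>card {a, b} = 2\<close>])
qed

definition covers_pairs_below :: "nat \<Rightarrow> (nat \<times> nat) list \<Rightarrow> bool" where
  "covers_pairs_below n L \<longleftrightarrow> (\<forall>b<n. \<forall>a<b. (a, b) \<in> set L \<or> (b, a) \<in> set L)"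

lemma pairs_atLeastLessThan_covered:
  assumes "covers_pairs_below n L" "p \<in> pairs {0..<n}"
  shows "\<exists>(u, v)\<in>set L. p = {u, v}"
proof -
  obtain x y where xy: "p = {x, y}" "x \<noteq> y" "x < n" "y < n"
    using assms(2) by (auto simp: pairs_def card_2_iff)
  consider "x < y" | "y < x" using xy(2) by linarith
  then have "(x, y) \<in> set L \<or> (y, x) \<in> set L"
    using assms(1) xy(3,4) unfolding covers_pairs_below_def by cases blast+
  then show ?thesis using xy(1) by (auto simp: insert_commute)
qed

lemma All_less_numeral:
  "(\<forall>i<numeral k. P i) \<longleftrightarrow> P (pred_numeral k) \<and> (\<forall>i<pred_numeral k. P (i :: nat))"
  by (subst numeral_eq_Suc) (rule All_less_Suc)

definition vertex_class :: "nat \<Rightarrow> nat" where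
  "vertex_class x = (if x < 9 then x div 3 else (x - 9) div 2 + 3)"

text \<open>Digit i of the signature in base 4 counts the vertices of e in class i, so a colour
  that depends only on the signature depends only on the multiset of classes.\<close>

definition class_signature :: "nat set \<Rightarrow> nat" where
  "class_signature e = (\<Sum>x\<in>e. 4 ^ vertex_class x)"

text \<open>An entry ((i, j, k), c) gives colour c to the edges with vertices in classes
  i \<le> j \<le> k.\<close>

definition colour_table :: "((nat \<times> nat \<times> nat) \<times> nat) list" where
  "colour_table =
    [((0,0,0), 3), ((0,0,1), 2), ((0,0,2), 3), ((0,0,3), 0), ((0,0,4), 3), ((0,0,5), 1),
     ((0,0,6), 3), ((0,1,1), 0), ((0,1,2), 2), ((0,1,3), 3), ((0,1,4), 0), ((0,1,5), 1),
     ((0,1,6), 1), ((0,2,2), 2), ((0,2,3), 1), ((0,2,4), 1), ((0,2,5), 3), ((0,2,6), 0),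
     ((0,3,3), 2), ((0,3,4), 3), ((0,3,5), 0), ((0,3,6), 1), ((0,4,4), 3), ((0,4,5), 0),
     ((0,4,6), 2), ((0,5,5), 0), ((0,5,6), 2), ((0,6,6), 2), ((1,1,1), 1), ((1,1,2), 0),
     ((1,1,3), 2), ((1,1,4), 1), ((1,1,5), 3), ((1,1,6), 2), ((1,2,2), 0), ((1,2,3), 1),
     ((1,2,4), 2), ((1,2,5), 3), ((1,2,6), 0), ((1,3,3), 1), ((1,3,4), 1), ((1,3,5), 0),
     ((1,3,6), 0), ((1,4,4), 3), ((1,4,5), 2), ((1,4,6), 2), ((1,5,5), 3), ((1,5,6), 3),
     ((1,6,6), 1), ((2,2,2), 3), ((2,2,3), 3), ((2,2,4), 1), ((2,2,5), 2), ((2,2,6), 3),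
     ((2,3,3), 0), ((2,3,4), 3), ((2,3,5), 1), ((2,3,6), 2), ((2,4,4), 2), ((2,4,5), 1),
     ((2,4,6), 0), ((2,5,5), 2), ((2,5,6), 0), ((2,6,6), 1), ((3,3,4), 2), ((3,3,5), 3),
     ((3,3,6), 0), ((3,4,4), 0), ((3,4,5), 0), ((3,4,6), 2), ((3,5,5), 3), ((3,5,6), 2),
     ((3,6,6), 3), ((4,4,5), 1), ((4,4,6), 3), ((4,5,5), 3), ((4,5,6), 1), ((4,6,6), 3),
     ((5,5,6), 1), ((5,6,6), 0)]"

definition signature_table :: "(nat \<times> nat) list" where
  "signature_table = map (\<lambda>((i, j, k), c). (4 ^ i + 4 ^ j + 4 ^ k, c)) colour_table"

lemmas signature_table_eval = signature_table_def[unfolded colour_table_def, simplified]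

definition signature_colour :: "nat \<Rightarrow> nat" where
  "signature_colour s = (case map_of signature_table s of Some c \<Rightarrow> c | None \<Rightarrow> 0)"

text \<open>Evaluating map_of by its defining equations makes the simplifier re-traverse the table
  at every step; this if-cascade is evaluated in time linear in the table size.\<close>

lemmas signature_colour_eval =
  signature_colour_def[unfolded signature_table_eval map_of_Cons_code map_of.simps(1)]

definition colouring :: "nat set \<Rightarrow> nat" where
  "colouring e = signature_colour (class_signature e)"

definition colour_class :: "nat \<Rightarrow> nat set set" where
  "colour_class c = {e \<in> triples {0..<17}. colouring e = c}"

lemma signature_colour_less_4: "signature_colour s < 4"
  by (auto simp: signature_colour_def signature_table_eval split: option.split
      dest!: map_of_SomeD)

lemma colour_class_3_uniform: "\<forall>e\<in>colour_class c. card e = 3"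
  by (simp add: colour_class_def triples_def)

lemma card_triple_eq_3_iff: "card {u, v, w} = 3 \<longleftrightarrow> distinct [u, v, w]"
proof -
  have "card (set [u, v, w]) = length [u, v, w] \<longleftrightarrow> distinct [u, v, w]"
    using distinct_card card_distinct by blast
  then show ?thesis
    by (simp only: list.set length_Cons list.size numeral_3_eq_3 add_Suc_right add_0_right)
qed

lemma class_signature_triple:
  "distinct [u, v, w] \<Longrightarrow>
     class_signature {u, v, w} = 4 ^ vertex_class u + 4 ^ vertex_class v + 4 ^ vertex_class w"
  by (simp add: class_signature_def add.assoc)

lemma triple_mem_colour_class:
  "{u, v, w} \<in> colour_class c \<longleftrightarrow> distinct [u, v, w] \<and> u < 17 \<and> v < 17 \<and> w < 17 \<and>
     signature_colour (4 ^ vertex_class u + 4 ^ vertex_class v + 4 ^ vertex_class w) = c"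
  unfolding colour_class_def triples_def mem_Collect_eq card_triple_eq_3_iff
  using class_signature_triple by (auto simp: colouring_def)

text \<open>Found by a greedy breadth-first search from the pair {0, 1}.\<close>

definition certificate :: "nat \<Rightarrow> (nat \<times> nat \<times> nat) list" where
  "certificate c =
    [[(0,1,9), (0,9,2), (0,2,10), (0,10,13), (0,13,11), (0,11,3), (0,3,4), (0,4,5),
      (0,5,12), (0,12,14), (12,14,1), (12,1,3), (12,3,2), (12,2,4), (2,4,11), (2,11,5),
      (11,5,1), (2,11,14), (2,14,13), (11,14,9), (11,9,12), (11,12,10), (9,12,13), (9,13,3),
      (9,3,15), (9,15,4), (9,4,16), (9,16,5), (16,5,6), (16,6,0), (16,0,7), (16,7,1),
      (16,1,8), (16,8,2), (8,2,15), (8,15,0), (8,15,5), (8,5,3), (8,3,6), (8,6,4),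
      (8,4,7), (3,6,7), (15,5,7), (15,7,11), (15,11,6), (15,6,1), (15,6,12), (15,6,13),
      (15,13,16), (15,16,14), (15,5,10), (5,10,14), (10,14,3), (10,3,16), (10,14,4), (16,8,11),
      (16,8,12), (10,13,1), (10,1,2), (16,12,7), (16,7,2), (16,2,6), (16,6,14), (16,14,7),
      (16,7,13), (16,13,8), (16,8,14), (10,4,13), (10,13,5), (10,16,9), (10,9,6), (10,9,7),
      (10,9,8), (11,1,4)],
     [(0,1,13), (0,13,2), (0,2,14), (0,14,3), (0,3,15), (0,15,4), (0,4,16), (0,16,5),
      (16,5,1), (16,1,3), (16,3,2), (16,2,9), (2,9,6), (2,6,10), (2,10,7), (2,7,11),
      (2,11,8), (2,8,12), (8,12,0), (8,0,9), (8,9,1), (8,1,10), (8,10,3), (10,3,9),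
      (10,9,4), (10,4,11), (10,11,5), (10,5,12), (5,12,3), (5,3,4), (5,12,9), (5,9,7),
      (9,7,13), (7,13,12), (7,12,1), (12,1,6), (12,6,14), (12,14,11), (14,11,15), (14,15,13),
      (14,13,16), (13,16,11), (13,11,6), (11,6,0), (9,7,14), (3,9,11), (8,10,13), (8,10,14),
      (1,10,15), (10,7,0), (2,9,15), (2,15,5), (5,1,14), (1,14,4), (13,2,4), (1,14,2),
      (2,5,13), (2,13,3), (15,5,16), (15,16,6), (15,16,7), (15,16,8), (10,0,16), (11,6,1),
      (11,6,7), (11,7,8), (11,8,6), (14,16,12), (14,12,15), (9,7,3), (9,3,6), (9,6,4),
      (9,4,7), (9,4,8), (9,8,5), (9,5,6), (9,4,12)],
     [(0,1,3), (0,3,2), (0,2,4), (0,4,6), (0,6,5), (0,5,7), (0,7,8), (7,8,1),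
      (7,1,4), (7,4,11), (7,11,3), (7,3,12), (3,12,6), (12,6,11), (12,11,8), (12,8,4),
      (12,4,13), (12,13,5), (12,5,14), (5,14,11), (5,11,15), (5,15,3), (5,3,9), (5,9,4),
      (5,4,10), (4,10,3), (4,3,16), (11,15,0), (11,0,16), (11,16,1), (16,1,12), (16,12,2),
      (16,2,13), (16,13,9), (16,9,6), (16,6,10), (16,10,7), (10,7,15), (10,15,8), (15,8,9),
      (15,9,12), (9,12,10), (9,10,0), (9,10,1), (9,10,2), (9,10,11), (15,9,14), (15,14,1),
      (15,1,13), (15,14,2), (16,10,14), (11,3,13), (7,1,6), (7,6,2), (6,2,8), (6,8,13),
      (6,13,14), (13,14,7), (2,8,5), (2,5,1), (14,7,8), (2,8,3), (16,14,0), (16,0,12),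
      (16,12,5), (16,0,13), (16,13,10), (16,10,8), (16,0,15), (15,2,11), (15,11,4), (11,4,14),
      (11,14,3), (15,9,6), (15,9,7)],
     [(0,1,2), (0,2,6), (0,6,13), (0,13,7), (0,7,14), (0,14,8), (14,8,1), (14,1,6),
      (14,6,3), (14,3,4), (14,4,5), (14,5,13), (14,13,9), (14,9,10), (14,13,11), (14,13,12),
      (5,13,3), (13,3,8), (13,8,2), (13,8,4), (13,4,15), (13,4,16), (14,5,15), (14,5,16),
      (7,14,2), (13,7,1), (0,2,11), (0,11,9), (0,9,3), (0,3,10), (0,10,4), (10,4,1),
      (10,1,5), (10,5,2), (10,2,12), (10,12,6), (10,6,7), (10,7,8), (10,8,11), (7,8,9),
      (7,9,12), (9,12,1), (12,1,11), (12,11,3), (12,11,4), (12,11,5), (12,11,15), (12,15,16),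
      (15,16,9), (15,16,10), (8,9,6), (8,6,15), (8,6,16), (5,2,9), (2,9,4), (0,2,15),
      (0,2,16), (0,16,1), (0,1,12), (0,1,15), (5,9,0), (2,9,3), (9,3,1), (8,16,7),
      (8,7,15), (9,6,11), (9,11,7), (12,16,11), (9,12,8), (14,16,3), (14,3,7), (14,7,4),
      (14,4,6), (14,6,5), (14,5,7), (14,5,8), (14,3,15), (14,10,13)]] ! c"

lemma certificates_valid:
  "\<forall>c<4. certificate c \<noteq> [] \<and> valid_extension (colour_class c) [(0, 1)] (certificate c)"
  by (simp del: One_nat_def add: All_less_numeral certificate_def triple_mem_colour_class
      signature_colour_eval vertex_class_def)

lemma certificates_cover: "\<forall>c<4. covers_pairs_below 17 (extend_pairs [(0, 1)] (certificate c))"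
  by (simp del: One_nat_def add: All_less_numeral certificate_def)
    (simp del: One_nat_def add: All_less_numeral covers_pairs_below_def)

lemma hconnected_colour_class:
  assumes "c < 4"
  shows "hconnected {0..<17} (colour_class c)"
proof (rule hconnected_by_certificate[OF colour_class_3_uniform])
  show "valid_extension (colour_class c) [(0, 1)] (certificate c)" "certificate c \<noteq> []"
    using certificates_valid assms by auto
  show "\<forall>p\<in>pairs {0..<17}. \<exists>(u, v)\<in>set (extend_pairs [(0, 1)] (certificate c)). p = {u, v}"
    using pairs_atLeastLessThan_covered certificates_cover assms by blast
qed

lemma triples_of_card_4:
  assumes "card S = 4"
  shows "triples S = (\<lambda>x. S - {x}) ` S"
proof (intro set_eqI iffI)
  have "finite S" using assms by (simp add: card_ge_0_finite)
  fix e assume "e \<in> triples S"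
  then have e: "e \<subseteq> S" "card e = 3" by (auto simp: triples_def)
  then have "card (S - e) = 1"
    using card_Diff_subset[OF finite_subset[OF e(1) \<open>finite S\<close>] e(1)] assms by simp
  then obtain x where x: "S - e = {x}" by (rule card_1_singletonE)
  then have "x \<in> S" "e = S - {x}" using e(1) by blast+
  then show "e \<in> (\<lambda>x. S - {x}) ` S" by blast
next
  fix e assume "e \<in> (\<lambda>x. S - {x}) ` S"
  then obtain x where "x \<in> S" "e = S - {x}" by blast
  then show "e \<in> triples S" using assms by (auto simp: triples_def)
qed

lemma sorted_quadruple:
  fixes Q :: "'a :: linorder set"
  assumes "finite Q" "card Q = 4"
  obtains i j k l where "i < j" "j < k" "k < l" "Q = {i, j, k, l}"
proof -
  define xs where "xs = sorted_list_of_set Q"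
  have xs: "sorted_wrt (<) xs" "set xs = Q" "length xs = 4"
    unfolding xs_def using assms by simp_all
  then obtain i j k l where "xs = [i, j, k, l]"
    by (auto simp: length_Suc_conv numeral_eq_Suc)
  then show ?thesis using that[of i j k l] xs(1,2) by auto
qed

lemma vertex_class_less_7: "x < 17 \<Longrightarrow> vertex_class x < 7"
  unfolding vertex_class_def by presburger

lemma colouring_Diff_same_class:
  assumes "finite S" "u \<in> S" "v \<in> S" "vertex_class u = vertex_class v"
  shows "colouring (S - {u}) = colouring (S - {v})"
proof (cases "u = v")
  case False
  define T where "T = S - {u, v}"
  have "S - {u} = insert v T" "S - {v} = insert u T" "finite T" "u \<notin> T" "v \<notin> T"
    using False assms(1-3) unfolding T_def by auto
  then show ?thesis
    using assms(4) by (simp add: colouring_def class_signature_def)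
qed simp

lemma colouring_Diff_distinct_classes:
  assumes "inj_on vertex_class S" "x \<in> S"
  shows "colouring (S - {x}) =
    signature_colour (\<Sum>s\<in>vertex_class ` S - {vertex_class x}. 4 ^ s)"
proof -
  have "vertex_class ` (S - {x}) = vertex_class ` S - {vertex_class x}"
    using inj_on_image_set_diff[OF assms(1), of S "{x}"] assms(2) by auto
  moreover have "inj_on vertex_class (S - {x})" using assms(1) by (rule inj_on_subset) blast
  ultimately show ?thesis
    unfolding colouring_def class_signature_def by (metis sum.reindex_cong)
qed

definition classes_multicoloured :: "nat \<Rightarrow> nat \<Rightarrow> nat \<Rightarrow> nat \<Rightarrow> bool" where
  "classes_multicoloured i j k l \<longleftrightarrow>
     card {signature_colour (4 ^ j + 4 ^ k + 4 ^ l), signature_colour (4 ^ i + 4 ^ k + 4 ^ l),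
       signature_colour (4 ^ i + 4 ^ j + 4 ^ l), signature_colour (4 ^ i + 4 ^ j + 4 ^ k)} = 4"

lemma no_classes_multicoloured: "\<forall>l<7. \<forall>k<l. \<forall>j<k. \<forall>i<j. \<not> classes_multicoloured i j k l"
  by (simp del: One_nat_def add: All_less_numeral)
    (simp add: classes_multicoloured_def signature_colour_eval card_insert_if)

lemma class_set_not_multicoloured:
  assumes "Q \<subseteq> {0..<7}" "card Q = 4"
  shows "card ((\<lambda>t. signature_colour (\<Sum>s\<in>Q - {t}. 4 ^ s)) ` Q) \<noteq> 4"
proof -
  obtain i j k l where ijkl: "i < j" "j < k" "k < l" and Q: "Q = {i, j, k, l}"
    using sorted_quadruple assms(2) finite_subset[OF assms(1)] by blast
  then have "l < 7" using assms(1) by auto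
  have "Q - {i} = {j, k, l}" "Q - {j} = {i, k, l}" "Q - {k} = {i, j, l}" "Q - {l} = {i, j, k}"
    using ijkl unfolding Q by auto
  then have "(\<lambda>t. signature_colour (\<Sum>s\<in>Q - {t}. 4 ^ s)) ` Q =
    {signature_colour (4 ^ j + 4 ^ k + 4 ^ l), signature_colour (4 ^ i + 4 ^ k + 4 ^ l),
     signature_colour (4 ^ i + 4 ^ j + 4 ^ l), signature_colour (4 ^ i + 4 ^ j + 4 ^ k)}"
    using ijkl unfolding Q by (simp add: add.assoc)
  then show ?thesis
    using no_classes_multicoloured \<open>l < 7\<close> ijkl by (simp add: classes_multicoloured_def)
qed

lemma colouring_not_multicoloured:
  assumes S: "S \<subseteq> {0..<17}" "card S = 4"
  shows "\<not> multicoloured colouring S"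
proof
  assume multi: "multicoloured colouring S"
  have "finite S" using S(2) by (simp add: card_ge_0_finite)
  define f where "f x = colouring (S - {x})" for x
  have "colouring ` triples S = f ` S"
    unfolding triples_of_card_4[OF S(2)] f_def by (simp add: image_image)
  then have card_f: "card (f ` S) = 4" using multi by (simp add: multicoloured_def)
  then have "inj_on f S" using S(2) \<open>finite S\<close> by (simp add: eq_card_imp_inj_on)
  then have inj: "inj_on vertex_class S"
    using colouring_Diff_same_class[OF \<open>finite S\<close>] unfolding f_def inj_on_def by metis
  define Q where "Q = vertex_class ` S"
  have "f ` S = (\<lambda>t. signature_colour (\<Sum>s\<in>Q - {t}. 4 ^ s)) ` Q"
    unfolding Q_def f_def image_image using colouring_Diff_distinct_classes[OF inj] by simp
  moreover have "Q \<subseteq> {0..<7}" "card Q = 4"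
    unfolding Q_def using S vertex_class_less_7 card_image[OF inj] by auto
  ultimately show False using class_set_not_multicoloured card_f by simp
qed

theorem proposition10:
  shows "\<exists>c :: nat set \<Rightarrow> nat. connected_colouring {0..<17} 4 c \<and>
           \<not> (\<exists>S. S \<subseteq> {0..<17} \<and> card S = 4 \<and> multicoloured c S)"
proof (intro exI conjI)
  show "connected_colouring {0..<17} 4 colouring"
    unfolding connected_colouring_def
    using signature_colour_less_4 hconnected_colour_class
    by (simp add: colouring_def colour_class_def)
  show "\<not> (\<exists>S. S \<subseteq> {0..<17} \<and> card S = 4 \<and> multicoloured colouring S)"
    using colouring_not_multicoloured by blast
qed

end
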